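(* Let $M\geq 2$. For $q\in\mathbb{Z}$ let $c_q\in\mathbb{C}^M$ be the truncated discrete cosine function defined by $c_q[p]:=2\cos\!\big(\tfrac{2\pi pq}{4M-3}\big)$ for $p=0,\ldots,M-1$, and let $E$ be the $M\times M$ diagonal matrix with diagonal entries $\omega_k=e^{2\pi ik/(2M-1)}$, $k=0,\ldots,M-1$. Then the intensity measurement mapping $\mathcal{A}\colon\mathbb{C}^M/\mathbb{T}\to\mathbb{R}^{4M-4}$ defined by $$\mathcal{A}(x):=\{|\langle x,c_q\rangle|^2\}_{q=0}^{2M-2}\cup\{|\langle x,E^*c_q\rangle|^2\}_{q=1}^{2M-3}$$ is injective; that is, if $x,y\in\mathbb{C}^M$ satisfy $|\langle x,c_q\rangle|=|\langle y,c_q\rangle|$ for $q=0,\ldots,2M-2$ and $|\langle x,E^*c_q\rangle|=|\langle y,E^*c_q\rangle|$ for $q=1,\ldots,2M-3$, then $y=\omega x$ for some $\omega\in\mathbb{C}$ with $|\omega|=1$.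
   Context: The inner product on $\mathbb{C}^M$ is $\langle x,y\rangle=\sum_{p}x[p]\overline{y[p]}$, with coordinates indexed $p=0,\ldots,M-1$. $\mathbb{T}$ denotes the unit circle $\{\omega\in\mathbb{C}:|\omega|=1\}$, and $\mathbb{C}^M/\mathbb{T}$ is the set of equivalence classes $\{\omega x:|\omega|=1\}$. $E^*$ is the conjugate transpose of $E$. *)

theory Defs
  imports "HOL-Analysis.Analysis"
begin

text \<open>Vectors in C^M are represented as functions nat => complex; only the
coordinates p < M are relevant.\<close>

definition inner_cM :: "nat \<Rightarrow> (nat \<Rightarrow> complex) \<Rightarrow> (nat \<Rightarrow> complex) \<Rightarrow> complex" where
  "inner_cM M x y = (\<Sum>p<M. x p * cnj (y p))"

definition cosvec :: "nat \<Rightarrow> int \<Rightarrow> nat \<Rightarrow> complex" where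
  "cosvec M q p = complex_of_real (2 * cos (2 * pi * real p * real_of_int q / (4 * real M - 3)))"

definition omega_diag :: "nat \<Rightarrow> nat \<Rightarrow> complex" where
  "omega_diag M k = exp (2 * pi * \<i> * of_nat k / (2 * of_nat M - 1))"

definition Estar_apply :: "nat \<Rightarrow> (nat \<Rightarrow> complex) \<Rightarrow> nat \<Rightarrow> complex" where
  "Estar_apply M v p = cnj (omega_diag M p) * v p"

end

theory Submission
  imports Defs
begin

text \<open>Put u = x + y and v = x - y. Since |<x,c>|^2 - |<y,c>|^2 = Re (<u,c> cnj <v,c>), equality of
the measurements with c_q says that the even trigonometric polynomial T(t) = Re (A_u(t) cnj A_v(t)),
where A_a(t) = sum_p a_p 2 cos (p t), vanishes at the angle 2 pi q / N with N = 4M - 3. As T has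
degree at most 2M - 2 < N, discrete orthogonality of cosines turns its vanishing on the whole grid
into the vanishing of all its cosine coefficients Lambda_j(u,v), which are bilinear in u and v. For
the c_q evenness supplies the whole grid. For the E^* c_q three grid points are missing, but
Lambda_0 and Lambda_(2M-2) only involve the diagonal products u_p cnj v_p, which E does not change,
and these two coefficients recover the missing samples. Finally, comparing top-degree coefficients,
Lambda_j(u,v) = Lambda_j(Eu,Ev) = 0 for all j forces v = i rho u for a real rho, because the phases
omega_d cnj omega_l are not real for d \<noteq> l; then y = omega x with omega = (1 - i rho) / (1 + i rho).\<close>

definition root_angle :: "nat \<Rightarrow> nat \<Rightarrow> real" where
  "root_angle N n = 2 * pi * real n / real N"

lemma cos_eq_1_imp_dvd:
  fixes k :: int and N :: nat
  assumes "N > 0" "cos (2 * pi * real_of_int k / real N) = 1"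
  shows "int N dvd k"
proof -
  obtain i :: int where "2 * pi * real_of_int k / real N = real_of_int i * 2 * pi"
    using assms(2) by (auto simp: cos_one_2pi_int)
  then have "real_of_int k = real_of_int (i * int N)"
    using assms(1) by (simp add: field_simps)
  then show ?thesis by (metis dvd_triv_right of_int_eq_iff)
qed

lemma sum_cos_root_angle:
  fixes s :: int
  assumes "N > 0" "\<bar>s\<bar> < int N"
  shows "(\<Sum>n<N. cos (real_of_int s * root_angle N n)) = (if s = 0 then real N else 0)"
proof (cases "s = 0")
  case False
  define z where "z = cis (2 * pi * real_of_int s / real N)"
  have cos_eq: "cos (real_of_int s * root_angle N n) = Re (z ^ n)" for n
  proof -
    have "real_of_int s * root_angle N n = real n * (2 * pi * real_of_int s / real N)"
      by (simp add: root_angle_def)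
    then show ?thesis unfolding z_def by (simp only: cos_n_Re_cis_pow_n)
  qed
  have "z ^ N = cis (real N * (2 * pi * real_of_int s / real N))"
    unfolding z_def by (rule Complex.DeMoivre)
  also have "\<dots> = cis (2 * pi * real_of_int s)" using assms(1) by simp
  finally have "z ^ N = 1" by simp
  moreover have "z \<noteq> 1"
  proof
    assume "z = 1"
    then have "cos (2 * pi * real_of_int s / real N) = 1"
      unfolding z_def by (metis cis.sel(1) one_complex.sel(1))
    with assms(1) have "int N dvd s" by (rule cos_eq_1_imp_dvd)
    with False assms(2) show False by (auto dest: dvd_imp_le_int)
  qed
  ultimately have "(\<Sum>n<N. z ^ n) = 0" by (simp add: geometric_sum)
  then show ?thesis using False by (simp add: cos_eq flip: Re_sum)
qed simp

lemma cos_mult_cos_mult_cos: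
  "cos (a::real) * cos b * cos c = (cos (a+b+c) + cos (a+b-c) + cos (a-b+c) + cos (a-b-c)) / 4"
proof -
  have "cos (c - (a+b)) = cos (a+b-c)" "cos (b+c-a) = cos (a-(b+c))"
    by (metis cos_minus minus_diff_eq)+
  then show ?thesis by (simp add: cos_times_cos field_simps)
qed

text \<open>The number of sign choices with p \<plusminus> r \<plusminus> j = 0.\<close>
definition triple_weight :: "nat \<Rightarrow> nat \<Rightarrow> nat \<Rightarrow> real" where
  "triple_weight j p r = of_bool (p + r = j) + of_bool (p = r + j) + of_bool (r = p + j)
     + of_bool (p = 0 \<and> r = 0 \<and> j = 0)"

lemma triple_weight_commute: "triple_weight j p r = triple_weight j r p"
  unfolding triple_weight_def by auto

lemma sum_cos_triple_product:
  assumes "N > 0" "p + r + j < N"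
  shows "(\<Sum>n<N. cos (real p * root_angle N n) * cos (real r * root_angle N n)
            * cos (real j * root_angle N n)) = real N / 4 * triple_weight j p r"
proof -
  define s1 s2 s3 s4 where "s1 = int p + int r + int j" and "s2 = int p + int r - int j"
    and "s3 = int p - int r + int j" and "s4 = int p - int r - int j"
  let ?c = "\<lambda>s n. cos (real_of_int s * root_angle N n)"
  have "cos (real p * root_angle N n) * cos (real r * root_angle N n) * cos (real j * root_angle N n)
      = (?c s1 n + ?c s2 n + ?c s3 n + ?c s4 n) / 4" for n
    unfolding cos_mult_cos_mult_cos s1_def s2_def s3_def s4_def by (simp add: algebra_simps)
  then have "(\<Sum>n<N. cos (real p * root_angle N n) * cos (real r * root_angle N n)
            * cos (real j * root_angle N n)) = (\<Sum>n<N. (?c s1 n + ?c s2 n + ?c s3 n + ?c s4 n) / 4)"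
    by (simp only:)
  also have "\<dots> = ((\<Sum>n<N. ?c s1 n) + (\<Sum>n<N. ?c s2 n) + (\<Sum>n<N. ?c s3 n) + (\<Sum>n<N. ?c s4 n)) / 4"
    by (simp add: sum.distrib flip: sum_divide_distrib)
  also have "\<dots> = ((if s1 = 0 then real N else 0) + (if s2 = 0 then real N else 0)
     + (if s3 = 0 then real N else 0) + (if s4 = 0 then real N else 0)) / 4"
  proof -
    have "\<bar>s\<bar> < int N" if "s \<in> {s1, s2, s3, s4}" for s
      using that assms(2) unfolding s1_def s2_def s3_def s4_def by auto
    then show ?thesis using assms(1) by (simp add: sum_cos_root_angle)
  qed
  also have "\<dots> = real N / 4 * triple_weight j p r"
    unfolding triple_weight_def s1_def s2_def s3_def s4_def by (auto simp: field_simps)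
  finally show ?thesis .
qed

lemma cos_root_angle_reflect:
  assumes "N > 0" "n \<le> N"
  shows "cos (real p * root_angle N (N - n)) = cos (real p * root_angle N n)"
proof -
  have "real p * root_angle N (N - n) = 2 * pi * real p - real p * root_angle N n"
    using assms by (simp add: root_angle_def of_nat_diff field_simps)
  then show ?thesis by (simp add: cos_diff cos_integer_2pi sin_integer_2pi)
qed

definition cos_transform :: "nat \<Rightarrow> (nat \<Rightarrow> complex) \<Rightarrow> real \<Rightarrow> complex" where
  "cos_transform M a t = (\<Sum>p<M. a p * complex_of_real (2 * cos (real p * t)))"

definition cross_intensity :: "nat \<Rightarrow> (nat \<Rightarrow> complex) \<Rightarrow> (nat \<Rightarrow> complex) \<Rightarrow> real \<Rightarrow> real" where
  "cross_intensity M a b t = Re (cos_transform M a t * cnj (cos_transform M b t))"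

text \<open>Up to normalisation, the j-th cosine coefficient of the trigonometric polynomial
cross_intensity M a b.\<close>
definition cross_coeff :: "nat \<Rightarrow> (nat \<Rightarrow> complex) \<Rightarrow> (nat \<Rightarrow> complex) \<Rightarrow> nat \<Rightarrow> real" where
  "cross_coeff M a b j = (\<Sum>p<M. \<Sum>r<M. Re (a p * cnj (b r)) * triple_weight j p r)"

lemma cross_intensity_expand:
  "cross_intensity M a b t
     = (\<Sum>p<M. \<Sum>r<M. Re (a p * cnj (b r)) * (4 * cos (real p * t) * cos (real r * t)))"
proof -
  have "cos_transform M a t * cnj (cos_transform M b t)
      = (\<Sum>p<M. \<Sum>r<M. a p * cnj (b r) * complex_of_real (4 * cos (real p * t) * cos (real r * t)))"
    unfolding cos_transform_def cnj_sum sum_product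
    by (intro sum.cong refl) (simp add: algebra_simps)
  then show ?thesis unfolding cross_intensity_def by (simp add: Re_sum)
qed

lemma sum_cross_intensity_mult_cos:
  assumes "N > 0" "j + 2 * M < N + 2"
  shows "(\<Sum>n<N. cross_intensity M a b (root_angle N n) * cos (real j * root_angle N n))
         = real N * cross_coeff M a b j"
proof -
  let ?t = "root_angle N"
  have "(\<Sum>n<N. cross_intensity M a b (?t n) * cos (real j * ?t n))
      = (\<Sum>n<N. \<Sum>p<M. \<Sum>r<M. Re (a p * cnj (b r)) * 4
          * (cos (real p * ?t n) * cos (real r * ?t n) * cos (real j * ?t n)))"
    unfolding cross_intensity_expand sum_distrib_right by (intro sum.cong refl) (simp add: mult_ac)
  also have "\<dots> = (\<Sum>p<M. \<Sum>r<M. Re (a p * cnj (b r)) * 4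
          * (\<Sum>n<N. cos (real p * ?t n) * cos (real r * ?t n) * cos (real j * ?t n)))"
    by (simp add: sum_distrib_left sum.swap[of _ "{..<N}"])
  also have "\<dots> = (\<Sum>p<M. \<Sum>r<M. Re (a p * cnj (b r)) * 4 * (real N / 4 * triple_weight j p r))"
    using assms by (intro sum.cong refl, subst sum_cos_triple_product) auto
  also have "\<dots> = real N * cross_coeff M a b j"
    unfolding cross_coeff_def sum_distrib_left by (intro sum.cong refl) (simp add: field_simps)
  finally show ?thesis .
qed

lemma cross_coeff_eq_0_if_grid_zero:
  assumes "N > 0" "j + 2 * M < N + 2"
    and "\<And>n. n < N \<Longrightarrow> cross_intensity M a b (root_angle N n) = 0"
  shows "cross_coeff M a b j = 0"
  using sum_cross_intensity_mult_cos[OF assms(1,2), of a b] assms(1,3) by simp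

lemma cross_intensity_reflect:
  assumes "N > 0" "n \<le> N"
  shows "cross_intensity M a b (root_angle N (N - n)) = cross_intensity M a b (root_angle N n)"
  unfolding cross_intensity_def cos_transform_def using cos_root_angle_reflect[OF assms] by simp

lemma cross_intensity_sum_diff_eq_0:
  assumes "cmod (cos_transform M x t) = cmod (cos_transform M y t)"
  shows "cross_intensity M (\<lambda>p. x p + y p) (\<lambda>p. x p - y p) t = 0"
proof -
  have "cos_transform M (\<lambda>p. x p + y p) t = cos_transform M x t + cos_transform M y t"
    and "cos_transform M (\<lambda>p. x p - y p) t = cos_transform M x t - cos_transform M y t"
    unfolding cos_transform_def by (simp_all add: algebra_simps sum.distrib sum_subtractf)
  moreover have "Re ((z + w) * cnj (z - w)) = (cmod z)^2 - (cmod w)^2" for z w :: complex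
    using cmod_power2[of z] cmod_power2[of w] by (simp add: algebra_simps power2_eq_square)
  ultimately show ?thesis unfolding cross_intensity_def using assms by simp
qed

text \<open>The second family of measurements sees E x, since <x, E^* c> = <E x, c>.\<close>
definition E_apply :: "nat \<Rightarrow> (nat \<Rightarrow> complex) \<Rightarrow> nat \<Rightarrow> complex" where
  "E_apply M a p = omega_diag M p * a p"

definition is_top_index :: "nat \<Rightarrow> (nat \<Rightarrow> complex) \<Rightarrow> nat \<Rightarrow> bool" where
  "is_top_index M a d \<longleftrightarrow> d < M \<and> a d \<noteq> 0 \<and> (\<forall>p. d < p \<longrightarrow> p < M \<longrightarrow> a p = 0)"

lemma top_index_exists:
  assumes "p < M" "a p \<noteq> 0"
  obtains d where "is_top_index M a d" "p \<le> d"
proof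
  let ?S = "{q. q < M \<and> a q \<noteq> 0}"
  have fin: "finite ?S" and p: "p \<in> ?S" using assms by auto
  then have "Max ?S \<in> ?S" by (intro Max_in) auto
  moreover have "q \<le> Max ?S" if "q \<in> ?S" for q using fin that by simp
  ultimately show "is_top_index M a (Max ?S)" "p \<le> Max ?S"
    unfolding is_top_index_def using p by (auto simp: not_le[symmetric])
qed

lemma cross_coeff_diff: "cross_coeff M a (\<lambda>r. b r - c r) j = cross_coeff M a b j - cross_coeff M a c j"
  unfolding cross_coeff_def by (simp add: sum_subtractf[symmetric] algebra_simps)

lemma cross_coeff_imaginary_multiple: "cross_coeff M a (\<lambda>r. \<i> * complex_of_real \<rho> * a r) j = 0"
proof -
  let ?g = "\<lambda>p r. \<rho> * Im (a p * cnj (a r)) * triple_weight j p r"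
  have "cross_coeff M a (\<lambda>r. \<i> * complex_of_real \<rho> * a r) j = (\<Sum>p<M. \<Sum>r<M. ?g p r)"
    unfolding cross_coeff_def by (intro sum.cong refl) (simp add: algebra_simps)
  moreover have "(\<Sum>p<M. \<Sum>r<M. ?g p r) = (\<Sum>r<M. \<Sum>p<M. ?g p r)" by (rule sum.swap)
  moreover have "\<dots> = - (\<Sum>p<M. \<Sum>r<M. ?g p r)"
    by (simp add: sum_negf[symmetric] triple_weight_commute algebra_simps)
  ultimately show ?thesis by simp
qed

lemma cross_coeff_top:
  assumes "d < M" "l < M" "\<And>p. d < p \<Longrightarrow> p < M \<Longrightarrow> a p = 0"
    and "\<And>r. l < r \<Longrightarrow> r < M \<Longrightarrow> b r = 0"
  shows "cross_coeff M a b (d + l) = triple_weight (d + l) d l * Re (a d * cnj (b l))"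
proof -
  let ?f = "\<lambda>(p, r). Re (a p * cnj (b r)) * triple_weight (d + l) p r"
  have "cross_coeff M a b (d + l) = sum ?f ({..<M} \<times> {..<M})"
    unfolding cross_coeff_def by (simp add: sum.cartesian_product)
  also have "\<dots> = sum ?f {(d, l)}"
  proof (rule sum.mono_neutral_right)
    have "?f (p, r) = 0" if "p < M" "r < M" "(p, r) \<noteq> (d, l)" for p r
    proof (cases "d < p \<or> l < r")
      case True
      then show ?thesis using assms(3,4) that by auto
    next
      case False
      then have "triple_weight (d + l) p r = 0" using that unfolding triple_weight_def by auto
      then show ?thesis by simp
    qed
    then show "\<forall>x\<in>{..<M} \<times> {..<M} - {(d, l)}. ?f x = 0" by blast
  qed (use assms(1,2) in auto)
  finally show ?thesis by simp
qed

lemma E_apply_sum_diff: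
  "E_apply M (\<lambda>p. x p + y p) = (\<lambda>p. E_apply M x p + E_apply M y p)"
  "E_apply M (\<lambda>p. x p - y p) = (\<lambda>p. E_apply M x p - E_apply M y p)"
  unfolding E_apply_def by (simp_all add: fun_eq_iff algebra_simps)

lemma omega_diag_cis: "omega_diag M k = cis (2 * pi * real k / (2 * real M - 1))"
proof -
  have "(2 * of_nat M - 1 :: complex) = complex_of_real (2 * real M - 1)" by simp
  then show ?thesis unfolding omega_diag_def cis_conv_exp by (simp add: field_simps)
qed

text \<open>Diagonal terms are insensitive to the phases of E, since their moduli are 1.\<close>
lemma cross_coeff_E_apply:
  assumes "\<And>p r. p < M \<Longrightarrow> r < M \<Longrightarrow> triple_weight j p r \<noteq> 0 \<Longrightarrow> p = r"
  shows "cross_coeff M (E_apply M a) (E_apply M b) j = cross_coeff M a b j"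
  unfolding cross_coeff_def
proof (intro sum.cong refl)
  fix p r assume pr: "p \<in> {..<M}" "r \<in> {..<M}"
  have "omega_diag M p * cnj (omega_diag M p) = 1"
    unfolding omega_diag_cis by (simp add: complex_eq_iff power2_eq_square[symmetric])
  then have diag: "E_apply M a p * cnj (E_apply M b p) = a p * cnj (b p)"
    unfolding E_apply_def by (simp add: algebra_simps)
  show "Re (E_apply M a p * cnj (E_apply M b r)) * triple_weight j p r
      = Re (a p * cnj (b r)) * triple_weight j p r"
  proof (cases "triple_weight j p r = 0")
    case False
    with assms pr have "r = p" by auto
    with diag show ?thesis by simp
  qed simp
qed

lemma Im_omega_diag_mult_cnj_neq_0:
  assumes "d < M" "l < M" "d \<noteq> l"
  shows "Im (omega_diag M d * cnj (omega_diag M l)) \<noteq> 0"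
proof -
  define a where "a = 2 * pi * (real d - real l) / (2 * real M - 1)"
  have "omega_diag M d * cnj (omega_diag M l) = cis a"
  proof -
    have cnj_cis: "cnj (cis x) = cis (- x)" for x by (simp add: complex_eq_iff)
    have "2 * pi * real d / (2 * real M - 1) + - (2 * pi * real l / (2 * real M - 1)) = a"
      unfolding a_def by (simp add: diff_divide_distrib algebra_simps)
    then show ?thesis unfolding omega_diag_cis cnj_cis cis_mult by simp
  qed
  moreover have "sin a \<noteq> 0"
  proof -
    have M: "2 * real M - 1 > 0" using assms by simp
    have "2 * \<bar>real d - real l\<bar> < 2 * real M - 1" using assms by (simp add: abs_if)
    then have "\<bar>a\<bar> < pi" unfolding a_def using M by (simp add: abs_divide abs_mult divide_less_eq)
    moreover have "a \<noteq> 0" unfolding a_def using assms M by simp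
    ultimately show ?thesis using sin_zero_pi_iff by blast
  qed
  ultimately show ?thesis by simp
qed

lemma complex_eq_0_if_Re_eq_0:
  fixes z c :: complex
  assumes "Re z = 0" "Re (c * z) = 0" "Im c \<noteq> 0"
  shows "z = 0"
  using assms by (simp add: complex_eq_iff)

lemma Re_top_products_eq_0:
  assumes "d < M" "l < M" "\<And>p. d < p \<Longrightarrow> p < M \<Longrightarrow> u p = 0"
    and "\<And>r. l < r \<Longrightarrow> r < M \<Longrightarrow> w r = 0"
    and "cross_coeff M u w (d + l) = 0" "cross_coeff M (E_apply M u) (E_apply M w) (d + l) = 0"
  shows "Re (u d * cnj (w l)) = 0"
    and "Re (omega_diag M d * cnj (omega_diag M l) * (u d * cnj (w l))) = 0"
proof -
  have weight: "triple_weight (d + l) d l \<noteq> 0"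
    unfolding triple_weight_def by (simp add: add_nonneg_eq_0_iff)
  show "Re (u d * cnj (w l)) = 0"
    using cross_coeff_top[of d M l u w] assms weight by simp
  have "cross_coeff M (E_apply M u) (E_apply M w) (d + l)
      = triple_weight (d + l) d l * Re (E_apply M u d * cnj (E_apply M w l))"
    using assms(1-4) by (intro cross_coeff_top) (auto simp: E_apply_def)
  moreover have "E_apply M u d * cnj (E_apply M w l)
      = omega_diag M d * cnj (omega_diag M l) * (u d * cnj (w l))"
    unfolding E_apply_def by (simp add: algebra_simps)
  ultimately show "Re (omega_diag M d * cnj (omega_diag M l) * (u d * cnj (w l))) = 0"
    using assms(6) weight by simp
qed

lemma top_index_eq:
  assumes "\<And>j. j \<le> 2 * M - 2 \<Longrightarrow> cross_coeff M u w j = 0"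
    and "\<And>j. j \<le> 2 * M - 2 \<Longrightarrow> cross_coeff M (E_apply M u) (E_apply M w) j = 0"
    and "is_top_index M u d" "is_top_index M w l"
  shows "l = d"
proof (rule ccontr)
  assume "l \<noteq> d"
  from assms(3,4) have top: "d < M" "l < M" "u d \<noteq> 0" "w l \<noteq> 0"
    "\<And>p. d < p \<Longrightarrow> p < M \<Longrightarrow> u p = 0" "\<And>r. l < r \<Longrightarrow> r < M \<Longrightarrow> w r = 0"
    unfolding is_top_index_def by auto
  then have "d + l \<le> 2 * M - 2" by simp
  then have "Re (u d * cnj (w l)) = 0"
    and "Re (omega_diag M d * cnj (omega_diag M l) * (u d * cnj (w l))) = 0"
    using Re_top_products_eq_0[of d M l u w] top assms(1,2) by blast+
  moreover have "Im (omega_diag M d * cnj (omega_diag M l)) \<noteq> 0"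
    using Im_omega_diag_mult_cnj_neq_0[OF top(1,2)] \<open>l \<noteq> d\<close> by simp
  ultimately have "u d * cnj (w l) = 0" by (rule complex_eq_0_if_Re_eq_0)
  with top show False by simp
qed

lemma imaginary_multiple_if_cross_coeffs_vanish:
  assumes coeffs: "\<And>j. j \<le> 2 * M - 2 \<Longrightarrow> cross_coeff M u v j = 0"
    and E_coeffs: "\<And>j. j \<le> 2 * M - 2 \<Longrightarrow> cross_coeff M (E_apply M u) (E_apply M v) j = 0"
  shows "(\<forall>p<M. u p = 0) \<or> (\<exists>\<rho>::real. \<forall>p<M. v p = \<i> * complex_of_real \<rho> * u p)"
proof (cases "\<forall>p<M. u p = 0")
  case False
  then obtain d where d: "is_top_index M u d" by (meson top_index_exists)
  then have dM: "d < M" and ud: "u d \<noteq> 0" and u_above: "\<And>p. d < p \<Longrightarrow> p < M \<Longrightarrow> u p = 0"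
    unfolding is_top_index_def by auto
  have v_above: "v p = 0" if p: "d < p" "p < M" for p
  proof (rule ccontr)
    assume "v p \<noteq> 0"
    then obtain l where "is_top_index M v l" "p \<le> l" using top_index_exists p(2) by metis
    with top_index_eq[OF coeffs E_coeffs d] p(1) show False by simp
  qed
  have "Re (u d * cnj (v d)) = 0"
    using coeffs E_coeffs dM by (intro Re_top_products_eq_0(1)[OF dM dM u_above v_above]) simp_all
  then have "Re (v d / u d) = 0"
    by (simp add: Re_divide algebra_simps)
  define \<rho> where "\<rho> = Im (v d / u d)"
  define w where "w = (\<lambda>r. v r - \<i> * complex_of_real \<rho> * u r)"
  have "v d / u d = \<i> * complex_of_real \<rho>"
    using \<open>Re (v d / u d) = 0\<close> unfolding \<rho>_def by (simp add: complex_eq_iff)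
  then have wd: "w d = 0" unfolding w_def using ud by (simp add: field_simps)
  have E_w: "E_apply M w = (\<lambda>r. E_apply M v r - \<i> * complex_of_real \<rho> * E_apply M u r)"
    unfolding w_def E_apply_def by (simp add: algebra_simps fun_eq_iff)
  have w_coeffs: "cross_coeff M u w j = 0" "cross_coeff M (E_apply M u) (E_apply M w) j = 0"
    if "j \<le> 2 * M - 2" for j
    using coeffs[OF that] E_coeffs[OF that]
    unfolding E_w unfolding w_def cross_coeff_diff cross_coeff_imaginary_multiple by simp_all
  have "w p = 0" if p: "p < M" for p
  proof (rule ccontr)
    assume "w p \<noteq> 0"
    then obtain l where "is_top_index M w l" using top_index_exists p by metis
    with top_index_eq[OF w_coeffs d] wd show False unfolding is_top_index_def by auto
  qed
  then show ?thesis unfolding w_def by auto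
qed simp

lemma unimodular_if_diff_imaginary_multiple_sum:
  fixes x y :: "nat \<Rightarrow> complex" and \<rho> :: real
  assumes "\<forall>p<M. x p - y p = \<i> * complex_of_real \<rho> * (x p + y p)"
  shows "\<exists>\<omega>. cmod \<omega> = 1 \<and> (\<forall>p<M. y p = \<omega> * x p)"
proof (intro exI conjI allI impI)
  define c where "c = \<i> * complex_of_real \<rho>"
  have nz: "1 + c \<noteq> 0" unfolding c_def by (simp add: complex_eq_iff)
  have "cmod (1 - c) = cmod (1 + c)" unfolding c_def by (simp add: cmod_def)
  then show "cmod ((1 - c) / (1 + c)) = 1" using nz by (simp add: norm_divide)
  fix p assume "p < M"
  then have "y p * (1 + c) = x p * (1 - c)" using assms unfolding c_def by (simp add: algebra_simps)
  then show "y p = (1 - c) / (1 + c) * x p" using nz by (simp add: field_simps)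
qed

lemma cross_coeffs_vanish_if_half_grid_zero:
  assumes "M \<ge> 2"
    and samples: "\<And>n. n \<le> 2 * M - 2 \<Longrightarrow> cross_intensity M a b (root_angle (4 * M - 3) n) = 0"
    and "j \<le> 2 * M - 2"
  shows "cross_coeff M a b j = 0"
proof (rule cross_coeff_eq_0_if_grid_zero)
  let ?N = "4 * M - 3"
  show "?N > 0" "j + 2 * M < ?N + 2" using assms(1,3) by auto
  fix n assume "n < ?N"
  show "cross_intensity M a b (root_angle ?N n) = 0"
  proof (cases "n \<le> 2 * M - 2")
    case False
    then have "?N - n \<le> 2 * M - 2" "?N - (?N - n) = n" "?N > 0" using \<open>n < ?N\<close> by auto
    then show ?thesis using samples cross_intensity_reflect[of ?N "?N - n"] by simp
  qed (rule samples)
qed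

text \<open>Because 4 (2M - 2)^2 = (4M - 3)(4M - 5) + 1, the modulus 4M - 3 does not divide (2M - 2)^2.\<close>
lemma cos_top_root_angle_neq_1:
  assumes "M \<ge> 2"
  shows "cos (real (2 * M - 2) * root_angle (4 * M - 3) (2 * M - 2)) \<noteq> 1"
proof
  let ?N = "4 * M - 3" and ?m = "2 * M - 2"
  assume "cos (real ?m * root_angle ?N ?m) = 1"
  then have "cos (2 * pi * real_of_int (int ?m * int ?m) / real ?N) = 1"
    unfolding root_angle_def by (simp add: mult_ac)
  then have "int ?N dvd int ?m * int ?m" using assms by (intro cos_eq_1_imp_dvd) auto
  moreover have "4 * (int ?m * int ?m) = int ?N * (int ?N - 2) + 1"
    using assms by (simp add: of_nat_diff algebra_simps)
  ultimately have "int ?N dvd int ?N * (int ?N - 2) + 1"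
    by (metis dvd_mult)
  then have "int ?N dvd 1" by (simp add: dvd_add_right_iff)
  then show False using assms by simp
qed

text \<open>The samples at 2M - 2 and 2M - 1 agree by reflection, so the two cosine coefficients 0 and
2M - 2 give two independent linear equations for the samples at 0 and 2M - 2.\<close>
lemma cross_intensity_grid_zero_if_three_samples_missing:
  assumes "M \<ge> 2"
    and off: "\<And>n. n < 4 * M - 3 \<Longrightarrow> n \<notin> {0, 2 * M - 2, 2 * M - 1} \<Longrightarrow>
        cross_intensity M a b (root_angle (4 * M - 3) n) = 0"
    and coeff_0: "cross_coeff M a b 0 = 0" and coeff_top: "cross_coeff M a b (2 * M - 2) = 0"
    and "n < 4 * M - 3"
  shows "cross_intensity M a b (root_angle (4 * M - 3) n) = 0"
proof -
  define N m where "N = 4 * M - 3" and "m = 2 * M - 2"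
  let ?T = "\<lambda>n. cross_intensity M a b (root_angle N n)"
  have N: "N > 0" "m \<le> N" "N - m = m + 1" "2 * M - 1 = m + 1" "0 < m"
    using assms(1) unfolding N_def m_def by auto
  have sum3: "(\<Sum>n<N. ?T n * cos (real j * root_angle N n))
      = ?T 0 + ?T m * cos (real j * root_angle N m) + ?T (m + 1) * cos (real j * root_angle N (m + 1))"
    for j
  proof -
    have "(\<Sum>n<N. ?T n * cos (real j * root_angle N n))
        = (\<Sum>n\<in>{0, m, m + 1}. ?T n * cos (real j * root_angle N n))"
      by (rule sum.mono_neutral_right) (use N off in \<open>auto simp: N_def m_def\<close>)
    then show ?thesis using N by (simp add: add.assoc root_angle_def)
  qed
  have reflect: "?T (m + 1) = ?T m" "cos (real m * root_angle N (m + 1)) = cos (real m * root_angle N m)"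
    using cross_intensity_reflect[of N m] cos_root_angle_reflect[of N m] N by simp_all
  let ?c = "cos (real m * root_angle N m)"
  have "?T 0 + 2 * ?T m = 0"
    using sum_cross_intensity_mult_cos[of N 0 M a b] sum3[of 0] coeff_0 reflect N
    by (simp add: N_def)
  moreover have "?T 0 + 2 * (?T m * ?c) = 0"
    using sum_cross_intensity_mult_cos[of N m M a b] sum3[of m] coeff_top reflect N
    by (simp add: N_def m_def)
  moreover have "2 * ?T m * (1 - ?c) = (?T 0 + 2 * ?T m) - (?T 0 + 2 * (?T m * ?c))"
    by (simp add: algebra_simps)
  ultimately have "2 * ?T m * (1 - ?c) = 0" by simp
  moreover have "?c \<noteq> 1"
    unfolding N_def m_def using assms(1) by (rule cos_top_root_angle_neq_1)
  ultimately have "?T m = 0" by simp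
  with \<open>?T 0 + 2 * ?T m = 0\<close> have "?T 0 = 0" by simp
  with \<open>?T m = 0\<close> show ?thesis
    using off assms(5) reflect N unfolding N_def[symmetric] m_def[symmetric]
    by (cases "n \<in> {0, m, m + 1}") auto
qed

lemma E_cross_coeffs_vanish:
  assumes "M \<ge> 2"
    and coeffs: "\<And>j. j \<le> 2 * M - 2 \<Longrightarrow> cross_coeff M u v j = 0"
    and samples: "\<And>n. 1 \<le> n \<Longrightarrow> n \<le> 2 * M - 3 \<Longrightarrow>
        cross_intensity M (E_apply M u) (E_apply M v) (root_angle (4 * M - 3) n) = 0"
    and "j \<le> 2 * M - 2"
  shows "cross_coeff M (E_apply M u) (E_apply M v) j = 0"
proof (rule cross_coeff_eq_0_if_grid_zero)
  let ?N = "4 * M - 3"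
  show "?N > 0" "j + 2 * M < ?N + 2" using assms(1,4) by auto
  have diagonal: "cross_coeff M (E_apply M u) (E_apply M v) i = 0" if "i \<in> {0, 2 * M - 2}" for i
  proof -
    have "triple_weight i p r = 0" if "p < M" "r < M" "p \<noteq> r" for p r
      using that \<open>i \<in> {0, 2 * M - 2}\<close> assms(1) unfolding triple_weight_def by auto
    then show ?thesis using cross_coeff_E_apply[of M i u v] coeffs that by fastforce
  qed
  fix n assume "n < ?N"
  then show "cross_intensity M (E_apply M u) (E_apply M v) (root_angle ?N n) = 0"
  proof (rule cross_intensity_grid_zero_if_three_samples_missing[OF assms(1), rotated 3])
    fix n assume n: "n < ?N" "n \<notin> {0, 2 * M - 2, 2 * M - 1}"
    show "cross_intensity M (E_apply M u) (E_apply M v) (root_angle ?N n) = 0"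
    proof (cases "n \<le> 2 * M - 3")
      case False
      then have "1 \<le> ?N - n" "?N - n \<le> 2 * M - 3" "?N - (?N - n) = n" "?N > 0" using n by auto
      then show ?thesis using samples cross_intensity_reflect[of ?N "?N - n"] by simp
    qed (use n samples in auto)
  qed (use diagonal in auto)
qed

lemma inner_cosvec_eq_cos_transform:
  assumes "M \<ge> 1"
  shows "inner_cM M x (cosvec M (int q)) = cos_transform M x (root_angle (4 * M - 3) q)"
    and "inner_cM M x (Estar_apply M (cosvec M (int q)))
      = cos_transform M (E_apply M x) (root_angle (4 * M - 3) q)"
proof -
  have "2 * pi * real p * real_of_int (int q) / (4 * real M - 3) = real p * root_angle (4 * M - 3) q"
    for p using assms by (simp add: root_angle_def of_nat_diff)
  then show "inner_cM M x (cosvec M (int q)) = cos_transform M x (root_angle (4 * M - 3) q)"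
    and "inner_cM M x (Estar_apply M (cosvec M (int q)))
      = cos_transform M (E_apply M x) (root_angle (4 * M - 3) q)"
    unfolding inner_cM_def cosvec_def cos_transform_def Estar_apply_def E_apply_def
    by (simp_all add: algebra_simps)
qed

theorem theorem6:
  fixes M :: nat and x y :: "nat \<Rightarrow> complex"
  assumes "M \<ge> 2"
    and "\<And>q::nat. q \<le> 2 * M - 2 \<Longrightarrow>
           cmod (inner_cM M x (cosvec M (int q))) = cmod (inner_cM M y (cosvec M (int q)))"
    and "\<And>q::nat. 1 \<le> q \<Longrightarrow> q \<le> 2 * M - 3 \<Longrightarrow>
           cmod (inner_cM M x (Estar_apply M (cosvec M (int q))))
             = cmod (inner_cM M y (Estar_apply M (cosvec M (int q))))"
  shows "\<exists>\<omega>::complex. cmod \<omega> = 1 \<and> (\<forall>p<M. y p = \<omega> * x p)"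
proof -
  define u v where "u = (\<lambda>p. x p + y p)" and "v = (\<lambda>p. x p - y p)"
  have "M \<ge> 1" using assms(1) by simp
  note inner = inner_cosvec_eq_cos_transform[OF this]
  have "cross_intensity M u v (root_angle (4 * M - 3) q) = 0" if "q \<le> 2 * M - 2" for q
    unfolding u_def v_def using assms(2)[OF that] by (intro cross_intensity_sum_diff_eq_0) (simp add: inner)
  then have coeffs: "cross_coeff M u v j = 0" if "j \<le> 2 * M - 2" for j
    using cross_coeffs_vanish_if_half_grid_zero[OF assms(1)] that by blast
  have "cross_intensity M (E_apply M u) (E_apply M v) (root_angle (4 * M - 3) q) = 0"
    if "1 \<le> q" "q \<le> 2 * M - 3" for q
    unfolding u_def v_def E_apply_sum_diff using assms(3)[OF that]
    by (intro cross_intensity_sum_diff_eq_0) (simp add: inner)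
  then have E_coeffs: "cross_coeff M (E_apply M u) (E_apply M v) j = 0" if "j \<le> 2 * M - 2" for j
    using E_cross_coeffs_vanish[OF assms(1) coeffs] that by blast
  from imaginary_multiple_if_cross_coeffs_vanish[OF coeffs E_coeffs] show ?thesis
  proof
    assume "\<forall>p<M. u p = 0"
    then show ?thesis unfolding u_def by (intro exI[of _ "-1"]) (simp add: add_eq_0_iff2)
  next
    assume "\<exists>\<rho>::real. \<forall>p<M. v p = \<i> * complex_of_real \<rho> * u p"
    then obtain \<rho> :: real where "\<forall>p<M. x p - y p = \<i> * complex_of_real \<rho> * (x p + y p)"
      unfolding u_def v_def by blast
    then show ?thesis by (rule unimodular_if_diff_imaginary_multiple_sum)
  qed
qed

end
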